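(* Let $N\ge 1$ be an integer. Let $\phi_0,\phi_1,\phi_2,\dots$ be the orthonormal Hermite polynomials with respect to the weight $M(v)=\frac{1}{\sqrt{2\pi}}e^{-v^2/2}$, i.e. $\int_{\mathbb{R}}\phi_i(v)\phi_j(v)M(v)\,dv=\delta_{ij}$, with $\phi_0=1$, $\phi_1(v)=v$ and $v\phi_k(v)=\sqrt{k}\,\phi_{k-1}(v)+\sqrt{k+1}\,\phi_{k+1}(v)$. Let $0<z_1<\dots<z_N$ be the positive roots of $\phi_{2N}$, and set $v_j=-z_j$, $v_{N+j}=z_j$ for $j=1,\dots,N$. Let $V$ be the $2N\times 2N$ matrix with entries $V_{ij}=\phi_{i}(v_{j+1})$ for $i,j=0,\dots,2N-1$. Let $A$ be the symmetric tridiagonal $2N\times 2N$ matrix with zero diagonal and off-diagonal entries $A_{p-1,p}=A_{p,p-1}=\sqrt{p}$ for $p=1,\dots,2N-1$ (indices from $0$). Define the $N\times 2N$ matrix $B_1=\begin{pmatrix} I_N & -I_N\end{pmatrix}V^T$. Then, for every number of edges $n$, $y^TAy=0$ for every $y\in\ker(B_1)$.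
   Context: $I_N$ denotes the $N\times N$ identity matrix. The matrix $B_1$ encodes the boundary condition $B_1U(0,t)=0$ satisfied by the sum of the moment vectors over all $n$ edges at a network junction with the symmetric coupling condition; it does not depend on $n$. *)

theory Defs
  imports Complex_Main "Jordan_Normal_Form.Matrix_Kernel"
begin

fun hphi :: "nat \<Rightarrow> real \<Rightarrow> real" where
  "hphi 0 v = 1"
| "hphi (Suc 0) v = v"
| "hphi (Suc (Suc k)) v =
     (v * hphi (Suc k) v - sqrt (real (Suc k)) * hphi k v) / sqrt (real (Suc (Suc k)))"

definition nodes :: "nat \<Rightarrow> (nat \<Rightarrow> real) \<Rightarrow> nat \<Rightarrow> real" where
  "nodes N z j = (if j \<le> N then - z j else z (j - N))"

definition Vmat :: "nat \<Rightarrow> (nat \<Rightarrow> real) \<Rightarrow> real mat" where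
  "Vmat N z = mat (2*N) (2*N) (\<lambda>(i,j). hphi i (nodes N z (j+1)))"

definition Amat :: "nat \<Rightarrow> real mat" where
  "Amat N = mat (2*N) (2*N) (\<lambda>(i,j).
     if j = i + 1 then sqrt (real j) else if i = j + 1 then sqrt (real i) else 0)"

definition IminusI :: "nat \<Rightarrow> real mat" where
  "IminusI N = mat N (2*N) (\<lambda>(i,j). if j = i then 1 else if j = i + N then -1 else 0)"

definition B1mat :: "nat \<Rightarrow> (nat \<Rightarrow> real) \<Rightarrow> real mat" where
  "B1mat N z = IminusI N * transpose_mat (Vmat N z)"

end

theory Submission
  imports Defs "HOL-Computational_Algebra.Polynomial"
begin

(* If B1 y = 0, then P(v) = sum_i y_i phi_i(v) takes equal values at the 2N distinct nodes
   -z_j and z_j. The odd part of P is a polynomial of degree < 2N vanishing at all of them,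
   hence zero; as phi_i has degree i and the parity of i, every odd coordinate of y vanishes.
   Since A only couples neighbouring indices, each term of y^T A y contains an odd coordinate. *)

fun hermite_poly :: "nat \<Rightarrow> real poly" where
  "hermite_poly 0 = 1"
| "hermite_poly (Suc 0) = [:0, 1:]"
| "hermite_poly (Suc (Suc k)) =
     Polynomial.smult (1 / sqrt (Suc (Suc k)))
       ([:0, 1:] * hermite_poly (Suc k) - Polynomial.smult (sqrt (Suc k)) (hermite_poly k))"

lemma poly_hermite_poly: "poly (hermite_poly k) v = hphi k v"
  by (induction k rule: hermite_poly.induct) (auto simp: algebra_simps diff_divide_distrib)

lemma hermite_poly_degree_lead_coeff:
  "degree (hermite_poly k) = k \<and> lead_coeff (hermite_poly k) > 0"
proof (induction k rule: hermite_poly.induct)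
  case (3 k)
  let ?a = "[:0, 1:] * hermite_poly (Suc k)"
    and ?b = "Polynomial.smult (sqrt (Suc k)) (hermite_poly k)"
  have deg_1: "degree (hermite_poly (Suc k)) = Suc k"
    and lc_1: "coeff (hermite_poly (Suc k)) (Suc k) > 0"
    using "3.IH"(1) by auto
  then have "hermite_poly (Suc k) \<noteq> 0"
    by auto
  then have deg_a: "degree ?a = Suc (Suc k)" and lc_a: "coeff ?a (Suc (Suc k)) > 0"
    using deg_1 lc_1 by (simp_all add: degree_mult_eq)
  have deg_b: "degree ?b < Suc (Suc k)"
    using "3.IH"(2) by simp
  then have "degree (?a - ?b) = Suc (Suc k)"
    using deg_a by (metis degree_add_eq_left degree_minus diff_conv_add_uminus)
  moreover have "coeff (?a - ?b) (Suc (Suc k)) > 0"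
    using lc_a deg_b by (simp add: coeff_eq_0)
  ultimately show ?case
    by (simp only: hermite_poly.simps degree_smult_eq coeff_smult) simp
qed simp_all

lemma degree_hermite_poly: "degree (hermite_poly k) = k"
  using hermite_poly_degree_lead_coeff by blast

lemma hermite_poly_neq_0: "hermite_poly k \<noteq> 0"
  using hermite_poly_degree_lead_coeff[of k] by auto

lemma hphi_uminus: "hphi k (- v) = (-1) ^ k * hphi k v"
  by (induction k rule: hermite_poly.induct) (simp_all add: algebra_simps)

lemma sum_smult_degree_eq_imp_coeffs_eq_0:
  fixes p :: "nat \<Rightarrow> 'a::idom poly"
  assumes "\<And>i. i < n \<Longrightarrow> degree (p i) = i \<and> p i \<noteq> 0"
    and "(\<Sum>i<n. Polynomial.smult (c i) (p i)) = 0" and "i < n"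
  shows "c i = 0"
  using assms
proof (induction n arbitrary: i)
  case (Suc n)
  have "coeff (\<Sum>i<n. Polynomial.smult (c i) (p i)) n = 0"
    using Suc.prems(1) by (simp add: coeff_sum coeff_eq_0)
  moreover have "degree (p n) = n" and "p n \<noteq> 0"
    using Suc.prems(1)[of n] by simp_all
  ultimately have "c n * lead_coeff (p n) = 0"
    using arg_cong[OF Suc.prems(2), of "\<lambda>q. coeff q n"] by simp
  then have cn: "c n = 0"
    using \<open>p n \<noteq> 0\<close> by simp
  then have "(\<Sum>i<n. Polynomial.smult (c i) (p i)) = 0"
    using Suc.prems(2) by simp
  then show ?case
    using Suc.IH[of i] Suc.prems(1,3) cn less_Suc_eq by auto
qed simp

lemma hermite_sum_even_on_imp_odd_coeffs_eq_0:
  fixes c :: "nat \<Rightarrow> real" and R :: "real set"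
  assumes "card R \<ge> n"
    and even: "\<And>x. x \<in> R \<Longrightarrow> (\<Sum>i<n. c i * hphi i (- x)) = (\<Sum>i<n. c i * hphi i x)"
    and "odd i" and "i < n"
  shows "c i = 0"
proof -
  define d where "d i = (if odd i then c i else 0)" for i
  define Q where "Q = (\<Sum>i<n. Polynomial.smult (d i) (hermite_poly i))"
  have poly_Q: "poly Q x = ((\<Sum>i<n. c i * hphi i x) - (\<Sum>i<n. c i * hphi i (- x))) / 2" for x
    unfolding Q_def poly_sum sum_subtractf[symmetric] sum_divide_distrib
    by (intro sum.cong) (auto simp: d_def poly_hermite_poly hphi_uminus)
  then have "poly Q x = poly 0 x" if "x \<in> R" for x
    using even[OF that] poly_Q[of x] by simp
  moreover have "degree Q \<le> n - 1"
    unfolding Q_def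
    by (rule degree_sum_le) (auto intro: order.trans[OF degree_smult_le] simp: degree_hermite_poly)
  then have "degree Q < n"
    using \<open>i < n\<close> by linarith
  ultimately have "Q = 0"
    using assms(1) \<open>i < n\<close> by (intro poly_eqI_degree[of R]) auto
  then have "d i = 0"
    unfolding Q_def using \<open>i < n\<close>
    by (intro sum_smult_degree_eq_imp_coeffs_eq_0)
      (auto simp: degree_hermite_poly hermite_poly_neq_0)
  then show ?thesis
    using \<open>odd i\<close> by (simp add: d_def)
qed

lemma card_Un_uminus_image:
  fixes S :: "real set"
  assumes "finite S" and "\<forall>x\<in>S. x > 0"
  shows "card (S \<union> uminus ` S) = 2 * card S"
proof -
  have "x \<noteq> - x'" if "x \<in> S" "x' \<in> S" for x x'
  proof -
    have "0 < x" "0 < x'"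
      using assms(2) that by auto
    then show ?thesis
      by linarith
  qed
  then have "S \<inter> uminus ` S = {}"
    by blast
  then show ?thesis
    using assms(1) by (simp add: card_Un_disjoint card_image)
qed

lemma transpose_Vmat_mult_vec_nth:
  assumes "y \<in> carrier_vec (2 * N)" and "j < 2 * N"
  shows "(transpose_mat (Vmat N z) *\<^sub>v y) $ j = (\<Sum>i<2 * N. y $ i * hphi i (nodes N z (j + 1)))"
  using assms by (simp add: Vmat_def scalar_prod_def mult.commute lessThan_atLeast0)

lemma IminusI_mult_vec_nth:
  assumes "w \<in> carrier_vec (2 * N)" and "k < N"
  shows "(IminusI N *\<^sub>v w) $ k = w $ k - w $ (k + N)"
proof -
  have "(IminusI N *\<^sub>v w) $ k
      = (\<Sum>i<2 * N. (if i = k then w $ i else 0) - (if i = k + N then w $ i else 0))"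
    using assms by (auto simp: IminusI_def scalar_prod_def lessThan_atLeast0 intro: sum.cong)
  then show ?thesis
    using assms(2) by (simp add: sum_subtractf)
qed

lemma B1mat_carrier: "B1mat N z \<in> carrier_mat N (2 * N)"
  unfolding B1mat_def
  by (rule mult_carrier_mat[where n = "2 * N"]) (simp_all add: IminusI_def Vmat_def)

lemma B1mat_kernel_even_at_nodes:
  assumes "y \<in> mat_kernel (B1mat N z)" and "j \<in> {1..N}"
  shows "(\<Sum>i<2 * N. y $ i * hphi i (- z j)) = (\<Sum>i<2 * N. y $ i * hphi i (z j))"
proof -
  define w where "w = transpose_mat (Vmat N z) *\<^sub>v y"
  have V: "Vmat N z \<in> carrier_mat (2 * N) (2 * N)" and I: "IminusI N \<in> carrier_mat N (2 * N)"
    by (simp_all add: Vmat_def IminusI_def)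
  have y: "y \<in> carrier_vec (2 * N)"
    and "B1mat N z *\<^sub>v y = 0\<^sub>v N"
    using mat_kernelD[OF B1mat_carrier assms(1)] by simp_all
  have w: "w \<in> carrier_vec (2 * N)"
    unfolding w_def using V y by (intro mult_mat_vec_carrier) simp_all
  from \<open>B1mat N z *\<^sub>v y = 0\<^sub>v N\<close> have "IminusI N *\<^sub>v w = 0\<^sub>v N"
    using V I y unfolding B1mat_def w_def by simp
  moreover have k: "j - 1 < N"
    using assms(2) by auto
  ultimately have "(IminusI N *\<^sub>v w) $ (j - 1) = 0"
    by simp
  then have "w $ (j - 1) = w $ (j - 1 + N)"
    unfolding IminusI_mult_vec_nth[OF w k] by simp
  moreover have "nodes N z (j - 1 + 1) = - z j" and "nodes N z (j - 1 + N + 1) = z j"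
    using assms(2) by (auto simp: nodes_def)
  moreover have "j - 1 + N < 2 * N"
    using k by simp
  ultimately show ?thesis
    using transpose_Vmat_mult_vec_nth[OF y, of "j - 1"]
      transpose_Vmat_mult_vec_nth[OF y, of "j - 1 + N"] k
    unfolding w_def by simp
qed

lemma Amat_mult_vec_even_nth:
  assumes "y \<in> carrier_vec (2 * N)" and "\<And>j. j < 2 * N \<Longrightarrow> odd j \<Longrightarrow> y $ j = 0"
    and "i < 2 * N" and "even i"
  shows "(Amat N *\<^sub>v y) $ i = 0"
proof -
  have "(Amat N *\<^sub>v y) $ i = (\<Sum>j<2 * N. Amat N $$ (i, j) * y $ j)"
    using assms(1,3) by (simp add: Amat_def scalar_prod_def lessThan_atLeast0)
  also have "\<dots> = 0"
  proof (rule sum.neutral, intro ballI)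
    fix j
    assume "j \<in> {..<2 * N}"
    then show "Amat N $$ (i, j) * y $ j = 0"
      using assms(2)[of j] assms(3,4) by (auto simp: Amat_def)
  qed
  finally show ?thesis .
qed

lemma Amat_quadratic_form_eq_0:
  assumes "y \<in> carrier_vec (2 * N)" and "\<And>j. j < 2 * N \<Longrightarrow> odd j \<Longrightarrow> y $ j = 0"
  shows "y \<bullet> (Amat N *\<^sub>v y) = 0"
proof -
  have "dim_vec (Amat N *\<^sub>v y) = 2 * N"
    by (simp add: Amat_def)
  then have "y \<bullet> (Amat N *\<^sub>v y) = (\<Sum>i<2 * N. y $ i * (Amat N *\<^sub>v y) $ i)"
    by (simp only: scalar_prod_def atLeast0LessThan)
  also have "\<dots> = 0"
  proof (rule sum.neutral, intro ballI)
    fix i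
    assume "i \<in> {..<2 * N}"
    then show "y $ i * (Amat N *\<^sub>v y) $ i = 0"
      using assms(2)[of i] Amat_mult_vec_even_nth[OF assms, of i] by (cases "even i") auto
  qed
  finally show ?thesis .
qed

theorem lemma4p2:
  fixes N :: nat and z :: "nat \<Rightarrow> real" and y :: "real vec"
  assumes "N \<ge> 1"
    and "strict_mono_on {1..N} z"
    and "\<forall>j\<in>{1..N}. 0 < z j \<and> hphi (2*N) (z j) = 0"
    and "\<forall>x>0. hphi (2*N) x = 0 \<longrightarrow> x \<in> z ` {1..N}"
    and "y \<in> mat_kernel (B1mat N z)"
  shows "y \<bullet> (Amat N *\<^sub>v y) = 0"
proof -
  define R where "R = z ` {1..N} \<union> uminus ` z ` {1..N}"
  have "card (z ` {1..N}) = N"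
    using strict_mono_on_imp_inj_on[OF assms(2)] by (simp add: card_image)
  then have card_R: "card R = 2 * N"
    unfolding R_def using assms(3) by (subst card_Un_uminus_image) auto
  have even_on_R: "(\<Sum>i<2 * N. y $ i * hphi i (- x)) = (\<Sum>i<2 * N. y $ i * hphi i x)"
    if "x \<in> R" for x
    using that B1mat_kernel_even_at_nodes[OF assms(5)] unfolding R_def by force
  have "y $ i = 0" if "i < 2 * N" and "odd i" for i
    using hermite_sum_even_on_imp_odd_coeffs_eq_0[where c = "\<lambda>i. y $ i" and R = R, OF _ even_on_R]
      card_R that
    by simp
  then show ?thesis
    using Amat_quadratic_form_eq_0[OF mat_kernelD(1)[OF B1mat_carrier assms(5)]] by blast
qed

end
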